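(* For every grounding tree $\Gamma[\Delta]\blacktriangleright A$ of size greater than $1$, one can derive from it, using only $\triangleright$ elimination rules, all the immediate grounding claims that compose it, and one can derive $\Gamma[\Delta]\blacktriangleright A$ from these immediate grounding claims using only $\triangleright$ introduction rules.
   Context: Language: grounding trees are formulae $\Gamma[\Delta]\blacktriangleright A$ where $\Gamma,\Delta$ are finite lists ($\Delta$ possibly empty) whose elements are either formulae or expressions $(\Theta[\Sigma])\triangleright B$, with $B$ a formula and $\Theta,\Sigma$ again such lists (nesting arbitrarily). An immediate grounding claim is such a formula in which no element of $\Gamma,\Delta$ has the form $(\cdot)\triangleright\cdot$. The immediate grounding claims composing a grounding tree $\Gamma[\Delta]\blacktriangleright A$ are defined recursively: if the elements of $\Gamma,\Delta$ of the form $(\cdot)\triangleright\cdot$ are $(\Gamma_i[\Delta_i])\triangleright A_i$ ($1\le i\le n$), they are the immediate grounding claim obtained by replacing each $(\Gamma_i[\Delta_i])\triangleright A_i$ with $A_i$, together with the immediate grounding claims composing each $\Gamma_i[\Delta_i]\blacktriangleright A_i$. Size: an immediate grounding claim has size $1$; if the elements of $\Gamma$ and $\Delta$ with outermost operator $\triangleright$ are $(\Gamma_1[\Delta_1])\triangleright A_1,\dots,(\Gamma_n[\Delta_n])\triangleright A_n$, then $|\Gamma[\Delta]\blacktriangleright A| = |\Gamma_1[\Delta_1]\blacktriangleright A_1|+\dots+|\Gamma_n[\Delta_n]\blacktriangleright A_n|+1$. Rules for $\triangleright$: Introductions: from $\Delta[\Theta]\blacktriangleright A$ and $\Gamma_1,A,\Gamma_2[\Xi]\blacktriangleright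 B$ infer $\Gamma_1,(\Delta[\Theta])\triangleright A,\Gamma_2[\Xi]\blacktriangleright B$; from $\Delta[\Theta]\blacktriangleright C$ and $\Gamma[\Xi_1,C,\Xi_2]\blacktriangleright B$ infer $\Gamma[\Xi_1,(\Delta[\Theta])\triangleright C,\Xi_2]\blacktriangleright B$. Eliminations: from $\Gamma_1,(\Delta[\Theta])\triangleright A,\Gamma_2[\Xi]\blacktriangleright B$ infer $\Delta[\Theta]\blacktriangleright A$ and $\Gamma_1,A,\Gamma_2[\Xi]\blacktriangleright B$; from $\Gamma[\Xi_1,(\Delta[\Theta])\triangleright C,\Xi_2]\blacktriangleright B$ infer $\Delta[\Theta]\blacktriangleright C$ and $\Gamma[\Xi_1,C,\Xi_2]\blacktriangleright B$. *)

theory Defs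
  imports Main
begin

text \<open>An element of a list \<Gamma> or \<Delta> is either a formula (F A) or an expression
  (\<Theta>[\<Sigma>]) \<triangleright> B, represented as Tri \<Theta> \<Sigma> B.\<close>

datatype 'f elem = F 'f | Tri "'f elem list" "'f elem list" 'f

text \<open>A grounding tree \<Gamma>[\<Delta>] \<blacktriangleright> A is the triple (\<Gamma>, \<Delta>, A).\<close>
type_synonym 'f gtree = "'f elem list \<times> 'f elem list \<times> 'f"

fun is_tri :: "'f elem \<Rightarrow> bool" where
  "is_tri (F a) = False"
| "is_tri (Tri G D a) = True"

definition immediate :: "'f gtree \<Rightarrow> bool" where
  "immediate t = (case t of (G, D, A) \<Rightarrow> (\<forall>e \<in> set (G @ D). \<not> is_tri e))"

fun strip :: "'f elem \<Rightarrow> 'f elem" where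
  "strip (F a) = F a"
| "strip (Tri G D a) = F a"

fun comps :: "'f elem \<Rightarrow> 'f gtree set" where
  "comps (F a) = {}"
| "comps (Tri G D a) = insert (map strip G, map strip D, a) (\<Union> (set (map comps (G @ D))))"

definition composing :: "'f gtree \<Rightarrow> 'f gtree set" where
  "composing t = (case t of (G, D, A) \<Rightarrow> comps (Tri G D A))"

fun esize :: "'f elem \<Rightarrow> nat" where
  "esize (F a) = 0"
| "esize (Tri G D a) = 1 + sum_list (map esize (G @ D))"

definition gsize :: "'f gtree \<Rightarrow> nat" where
  "gsize t = (case t of (G, D, A) \<Rightarrow> esize (Tri G D A))"

inductive elim_der :: "'f gtree set \<Rightarrow> 'f gtree \<Rightarrow> bool" for H where
  prem: "t \<in> H \<Longrightarrow> elim_der H t"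
| elimL1: "elim_der H (G1 @ Tri D Th A # G2, X, B) \<Longrightarrow> elim_der H (D, Th, A)"
| elimL2: "elim_der H (G1 @ Tri D Th A # G2, X, B) \<Longrightarrow> elim_der H (G1 @ F A # G2, X, B)"
| elimR1: "elim_der H (G, X1 @ Tri D Th C # X2, B) \<Longrightarrow> elim_der H (D, Th, C)"
| elimR2: "elim_der H (G, X1 @ Tri D Th C # X2, B) \<Longrightarrow> elim_der H (G, X1 @ F C # X2, B)"

inductive intro_der :: "'f gtree set \<Rightarrow> 'f gtree \<Rightarrow> bool" for H where
  prem: "t \<in> H \<Longrightarrow> intro_der H t"
| introL: "intro_der H (D, Th, A) \<Longrightarrow> intro_der H (G1 @ F A # G2, X, B)
           \<Longrightarrow> intro_der H (G1 @ Tri D Th A # G2, X, B)"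
| introR: "intro_der H (D, Th, C) \<Longrightarrow> intro_der H (G, X1 @ F C # X2, B)
           \<Longrightarrow> intro_der H (G, X1 @ Tri D Th C # X2, B)"

end

theory Submission
  imports Defs
begin

text \<open>An elimination step on an
  embedded subtree (\<Delta>[\<Theta>]) \<triangleright> A yields the subtree \<Delta>[\<Theta>] \<blacktriangleright> A and the tree with the subtree
  replaced by A; eliminating all embedded subtrees of the root leaves its immediate claim,
  and the induction hypothesis handles the subtrees. Conversely, the introduction rules
  rebuild the tree from its immediate root claim and its subtrees, and the latter are
  rebuilt from their own components by induction.\<close>

lemma elim_der_subtree:
  assumes "elim_der H (G, D, B)" and "Tri G' D' a \<in> set (G @ D)"
  shows "elim_der H (G', D', a)"
  using assms(2) unfolding set_append
proof
  assume "Tri G' D' a \<in> set G"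
  then obtain G1 G2 where "G = G1 @ Tri G' D' a # G2" by (meson split_list)
  with assms(1) show ?thesis by (metis elim_der.elimL1)
next
  assume "Tri G' D' a \<in> set D"
  then obtain D1 D2 where "D = D1 @ Tri G' D' a # D2" by (meson split_list)
  with assms(1) show ?thesis by (metis elim_der.elimR1)
qed

lemma elim_der_strip_left:
  "elim_der H (G1 @ G2, D, B) \<Longrightarrow> elim_der H (G1 @ map strip G2, D, B)"
proof (induction G2 arbitrary: G1)
  case Nil
  then show ?case by simp
next
  case (Cons e G2)
  have "elim_der H (G1 @ strip e # G2, D, B)"
  proof (cases e)
    case (Tri G' D' a)
    then show ?thesis using Cons.prems elim_der.elimL2[of H G1 G' D' a G2 D B] by simp
  qed (use Cons.prems in simp)
  then show ?case using Cons.IH[of "G1 @ [strip e]"] by simp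
qed

lemma elim_der_strip_right:
  "elim_der H (G, D1 @ D2, B) \<Longrightarrow> elim_der H (G, D1 @ map strip D2, B)"
proof (induction D2 arbitrary: D1)
  case Nil
  then show ?case by simp
next
  case (Cons e D2)
  have "elim_der H (G, D1 @ strip e # D2, B)"
  proof (cases e)
    case (Tri G' D' a)
    then show ?thesis using Cons.prems elim_der.elimR2[of H G D1 G' D' a D2 B] by simp
  qed (use Cons.prems in simp)
  then show ?case using Cons.IH[of "D1 @ [strip e]"] by simp
qed

lemma elim_der_strip:
  "elim_der H (G, D, B) \<Longrightarrow> elim_der H (map strip G, map strip D, B)"
  using elim_der_strip_left[of H "[]" G D B] elim_der_strip_right[of H "map strip G" "[]" D B]
  by simp

lemma elim_der_comps:
  "elim_der H (G, D, a) \<Longrightarrow> c \<in> comps (Tri G D a) \<Longrightarrow> elim_der H c"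
proof (induction "Tri G D a" arbitrary: G D a c rule: comps.induct)
  case (2 G D a)
  have "c = (map strip G, map strip D, a) \<or> (\<exists>e \<in> set (G @ D). c \<in> comps e)"
    using "2.prems"(2) by auto
  then show ?case
  proof
    assume "c = (map strip G, map strip D, a)"
    then show ?thesis using "2.prems"(1) by (simp add: elim_der_strip)
  next
    assume "\<exists>e \<in> set (G @ D). c \<in> comps e"
    then obtain e where e: "e \<in> set (G @ D)" "c \<in> comps e" by blast
    obtain G' D' a' where "e = Tri G' D' a'" using e(2) by (cases e) auto
    with e have subtree: "Tri G' D' a' \<in> set (G @ D)" and c: "c \<in> comps (Tri G' D' a')"
      by simp_all
    have "elim_der H (G', D', a')"
      using "2.prems"(1) subtree by (rule elim_der_subtree)
    with subtree show ?thesis using c by (rule "2.hyps")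
  qed
qed

lemma intro_der_unstrip_left:
  "intro_der H (G1 @ map strip G2, D, B) \<Longrightarrow>
   (\<And>G' D' a. Tri G' D' a \<in> set G2 \<Longrightarrow> intro_der H (G', D', a)) \<Longrightarrow>
   intro_der H (G1 @ G2, D, B)"
proof (induction G2 arbitrary: G1)
  case Nil
  then show ?case by simp
next
  case (Cons e G2)
  have stripped: "intro_der H (G1 @ strip e # G2, D, B)"
    using Cons.IH[of "G1 @ [strip e]"] Cons.prems by simp
  show ?case
  proof (cases e)
    case (Tri G' D' a)
    then show ?thesis
      using stripped Cons.prems(2)
        intro_der.introL[of H G' D' a G1 G2 D B] by simp
  qed (use stripped in simp)
qed

lemma intro_der_unstrip_right:
  "intro_der H (G, D1 @ map strip D2, B) \<Longrightarrow>
   (\<And>G' D' a. Tri G' D' a \<in> set D2 \<Longrightarrow> intro_der H (G', D', a)) \<Longrightarrow>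
   intro_der H (G, D1 @ D2, B)"
proof (induction D2 arbitrary: D1)
  case Nil
  then show ?case by simp
next
  case (Cons e D2)
  have stripped: "intro_der H (G, D1 @ strip e # D2, B)"
    using Cons.IH[of "D1 @ [strip e]"] Cons.prems by simp
  show ?case
  proof (cases e)
    case (Tri G' D' a)
    then show ?thesis
      using stripped Cons.prems(2)
        intro_der.introR[of H G' D' a G D1 D2 B] by simp
  qed (use stripped in simp)
qed

lemma intro_der_unstrip:
  assumes "intro_der H (map strip G, map strip D, B)"
    and "\<And>G' D' a. Tri G' D' a \<in> set (G @ D) \<Longrightarrow> intro_der H (G', D', a)"
  shows "intro_der H (G, D, B)"
proof -
  have "intro_der H (map strip G, D, B)"
    using intro_der_unstrip_right[of H "map strip G" "[]" D B] assms by simp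
  then show ?thesis
    using intro_der_unstrip_left[of H "[]" G D B] assms(2) by simp
qed

lemma comps_subtree_subset:
  "e \<in> set (G @ D) \<Longrightarrow> comps e \<subseteq> comps (Tri G D a)"
  by auto

lemma intro_der_of_comps:
  "comps (Tri G D a) \<subseteq> H \<Longrightarrow> intro_der H (G, D, a)"
proof (induction "Tri G D a" arbitrary: G D a rule: comps.induct)
  case (2 G D a)
  show ?case
  proof (rule intro_der_unstrip)
    show "intro_der H (map strip G, map strip D, a)"
      using "2.prems" by (auto intro: intro_der.prem)
  next
    fix G' D' a'
    assume subtree: "Tri G' D' a' \<in> set (G @ D)"
    then have "comps (Tri G' D' a') \<subseteq> comps (Tri G D a)"
      by (rule comps_subtree_subset)
    with "2.prems" have "comps (Tri G' D' a') \<subseteq> H"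
      by (rule order_trans[rotated])
    with subtree show "intro_der H (G', D', a')" by (rule "2.hyps")
  qed
qed

theorem mainTheorem5:
  fixes t :: "'f gtree"
  assumes "gsize t > 1"
  shows "(\<forall>c \<in> composing t. elim_der {t} c) \<and> intro_der (composing t) t"
proof -
  obtain G D A where t: "t = (G, D, A)" by (cases t)
  have "elim_der {t} (G, D, A)"
    using t by (simp add: elim_der.prem)
  have "\<forall>c \<in> composing t. elim_der {t} c"
  proof
    fix c
    assume "c \<in> composing t"
    then have "c \<in> comps (Tri G D A)" unfolding t composing_def prod.case .
    with \<open>elim_der {t} (G, D, A)\<close> show "elim_der {t} c" by (rule elim_der_comps)
  qed
  moreover have "intro_der (composing t) t"
    unfolding t composing_def prod.case by (rule intro_der_of_comps[OF order_refl])
  ultimately show ?thesis ..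
qed

end
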